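(* Let $L$ be a distributive lattice and let $a,b\in L$ with $a<b$. Then $$\max\{\aleph_0,|[a,b]_L|\}\le\operatorname{dens}\big([\delta_a,\delta_b]_{\mathrm{FBL}\langle L\rangle}\big)\le\max\{\aleph_0,|L|\},$$ where $[a,b]_L=\{x\in L:a\le x\le b\}$ and $[\delta_a,\delta_b]_{\mathrm{FBL}\langle L\rangle}=\{f\in\mathrm{FBL}\langle L\rangle:\delta_a\le f\le\delta_b\}$ (with the norm topology).
   Context: $L^*$ is the set of all lattice homomorphisms $x^*:L\to[-1,1]$; for $x\in L$, $\delta_x:L^*\to\mathbb R$ is $\delta_x(x^* )=x^*(x)$. A function $f:L^*\to\mathbb R$ is positively homogeneous if $f(\lambda x^* )=\lambda f(x^* )$ whenever $\lambda\ge0$ and $\lambda x^*\in L^*$; for such $f$, $\|f\|=\sup\{\sum_{i=1}^m|f(x_i^* )|: m\in\mathbb N,\ x_i^*\in L^*,\ \sup_{x\in L}\sum_{i=1}^m|x_i^*(x)|\le1\}$. $\mathrm{FBL}\langle L\rangle$ is the norm closure of the vector sublattice generated by $\{\delta_x:x\in L\}$ inside the Banach lattice of positively homogeneous functions on $L^*$ with finite norm, with pointwise order and operations. The density character $\operatorname{dens}(S)$ is the least cardinality of a dense subset of $S$. *)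

theory Defs
  imports "HOL-Analysis.Analysis"
begin

definition lstar :: "('a::distrib_lattice \<Rightarrow> real) set" where
  "lstar = {\<phi>. (\<forall>x. -1 \<le> \<phi> x \<and> \<phi> x \<le> 1) \<and>
                 (\<forall>x y. \<phi> (inf x y) = min (\<phi> x) (\<phi> y)) \<and>
                 (\<forall>x y. \<phi> (sup x y) = max (\<phi> x) (\<phi> y))}"

text \<open>Functions on L^* are represented as functions on 'a => real that vanish off L^*.\<close>
definition fbl_delta :: "'a::distrib_lattice \<Rightarrow> (('a \<Rightarrow> real) \<Rightarrow> real)" where
  "fbl_delta x = (\<lambda>\<phi>. if \<phi> \<in> lstar then \<phi> x else 0)"

definition pos_homog :: "(('a::distrib_lattice \<Rightarrow> real) \<Rightarrow> real) \<Rightarrow> bool" where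
  "pos_homog f \<longleftrightarrow> (\<forall>\<phi>\<in>lstar. \<forall>c::real. c \<ge> 0 \<longrightarrow> (\<lambda>x. c * \<phi> x) \<in> lstar \<longrightarrow>
                      f (\<lambda>x. c * \<phi> x) = c * f \<phi>)"

definition fbl_norm :: "(('a::distrib_lattice \<Rightarrow> real) \<Rightarrow> real) \<Rightarrow> ereal" where
  "fbl_norm f = Sup {ereal (\<Sum>i<m. \<bar>f (\<phi> i)\<bar>) | (m::nat) \<phi>.
                       (\<forall>i<m. (\<phi> i :: 'a \<Rightarrow> real) \<in> lstar) \<and>
                       (\<forall>x. (\<Sum>i<m. \<bar>\<phi> i x\<bar>) \<le> 1)}"

definition fbl_space :: "(('a::distrib_lattice \<Rightarrow> real) \<Rightarrow> real) set" where
  "fbl_space = {f. (\<forall>\<phi>. \<phi> \<notin> lstar \<longrightarrow> f \<phi> = 0) \<and> pos_homog f \<and> fbl_norm f < \<infinity>}"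

inductive_set fbl_gen :: "(('a::distrib_lattice \<Rightarrow> real) \<Rightarrow> real) set" where
  gen_delta: "fbl_delta x \<in> fbl_gen"
| gen_add: "f \<in> fbl_gen \<Longrightarrow> g \<in> fbl_gen \<Longrightarrow> (\<lambda>\<phi>. f \<phi> + g \<phi>) \<in> fbl_gen"
| gen_scale: "f \<in> fbl_gen \<Longrightarrow> (\<lambda>\<phi>. c * f \<phi>) \<in> fbl_gen"
| gen_sup: "f \<in> fbl_gen \<Longrightarrow> g \<in> fbl_gen \<Longrightarrow> (\<lambda>\<phi>. max (f \<phi>) (g \<phi>)) \<in> fbl_gen"

definition FBL :: "(('a::distrib_lattice \<Rightarrow> real) \<Rightarrow> real) set" where
  "FBL = {f \<in> fbl_space. \<forall>\<epsilon>>0. \<exists>g\<in>fbl_gen. fbl_norm (\<lambda>\<phi>. f \<phi> - g \<phi>) < ereal \<epsilon>}"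

definition fbl_interval :: "'a::distrib_lattice \<Rightarrow> 'a \<Rightarrow> (('a \<Rightarrow> real) \<Rightarrow> real) set" where
  "fbl_interval a b = {f \<in> FBL. \<forall>\<phi>. fbl_delta a \<phi> \<le> f \<phi> \<and> f \<phi> \<le> fbl_delta b \<phi>}"

definition fbl_dense_in :: "(('a::distrib_lattice \<Rightarrow> real) \<Rightarrow> real) set \<Rightarrow> (('a \<Rightarrow> real) \<Rightarrow> real) set \<Rightarrow> bool" where
  "fbl_dense_in D S \<longleftrightarrow> D \<subseteq> S \<and>
     (\<forall>f\<in>S. \<forall>\<epsilon>>0. \<exists>g\<in>D. fbl_norm (\<lambda>\<phi>. f \<phi> - g \<phi>) < ereal \<epsilon>)"

end

theory Submission
  imports Defs "HOL-Library.Countable_Set_Type"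
begin

text \<open>Evaluation at a point of \<open>L\<^sup>*\<close> is bounded by the norm of \<open>FBL\<langle>L\<rangle>\<close>. By the prime
ideal theorem for distributive lattices, distinct points of \<open>L\<close> are separated by
\<open>{0,1}\<close>-valued lattice homomorphisms, so the \<open>\<delta>\<^sub>x\<close> with \<open>x \<in> [a,b]\<close> lie in the interval
\<open>[\<delta>\<^sub>a,\<delta>\<^sub>b]\<close> at mutual distance at least 1, and a dense subset must contain distinct
points near each of them. Read at a homomorphism with \<open>\<phi> a = 0\<close> and \<open>\<phi> b = 1\<close>, the
points \<open>(1 - k/(n+1)) \<delta>\<^sub>a + k/(n+1) \<delta>\<^sub>b\<close>, \<open>k \<le> n\<close>, are \<open>1/(n+1)\<close>-separated for every \<open>n\<close>,
so a dense subset is infinite.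

Conversely, every element of the generated vector lattice is approximated by a lattice
expression in the \<open>\<delta>\<^sub>x\<close> with rational coefficients, and replacing such an expression \<open>q\<close> by
\<open>(q \<squnion> \<delta>\<^sub>a) \<sqinter> \<delta>\<^sub>b\<close> does not increase its distance to elements of the interval. The
truncated expressions are therefore dense; as values of reverse Polish programs, i.e. words
over \<open>L\<close> plus a countable alphabet, there are at most \<open>max(\<aleph>\<^sub>0, |L|)\<close> of them.\<close>

unbundle cardinal_syntax

lemma fbl_norm_le_iff:
  "fbl_norm f \<le> ereal r \<longleftrightarrow>
    (\<forall>m (\<phi> :: nat \<Rightarrow> 'a::distrib_lattice \<Rightarrow> real).
       (\<forall>i<m. \<phi> i \<in> lstar) \<and> (\<forall>x. (\<Sum>i<m. \<bar>\<phi> i x\<bar>) \<le> 1)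
       \<longrightarrow> (\<Sum>i<m. \<bar>f (\<phi> i)\<bar>) \<le> r)"
  unfolding fbl_norm_def Sup_le_iff by (auto simp del: ereal_less_eq simp: ereal_less_eq(3)[symmetric])

lemma fbl_norm_le_pointwise_comb:
  fixes f g h :: "('a::distrib_lattice \<Rightarrow> real) \<Rightarrow> real"
  assumes "\<And>\<phi>. \<phi> \<in> lstar \<Longrightarrow> \<bar>f \<phi>\<bar> \<le> s * \<bar>g \<phi>\<bar> + t * \<bar>h \<phi>\<bar>"
    and "s \<ge> 0" "t \<ge> 0" "fbl_norm g \<le> ereal r" "fbl_norm h \<le> ereal r'"
  shows "fbl_norm f \<le> ereal (s * r + t * r')"
  unfolding fbl_norm_le_iff
proof (intro allI impI)
  fix m and \<phi> :: "nat \<Rightarrow> 'a \<Rightarrow> real"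
  assume adm: "(\<forall>i<m. \<phi> i \<in> lstar) \<and> (\<forall>x. (\<Sum>i<m. \<bar>\<phi> i x\<bar>) \<le> 1)"
  have "(\<Sum>i<m. \<bar>f (\<phi> i)\<bar>) \<le> (\<Sum>i<m. s * \<bar>g (\<phi> i)\<bar> + t * \<bar>h (\<phi> i)\<bar>)"
    using adm assms(1) by (intro sum_mono) auto
  also have "\<dots> = s * (\<Sum>i<m. \<bar>g (\<phi> i)\<bar>) + t * (\<Sum>i<m. \<bar>h (\<phi> i)\<bar>)"
    by (simp add: sum.distrib sum_distrib_left)
  also have "\<dots> \<le> s * r + t * r'"
    using assms(2-5) adm unfolding fbl_norm_le_iff by (intro add_mono mult_left_mono) auto
  finally show "(\<Sum>i<m. \<bar>f (\<phi> i)\<bar>) \<le> s * r + t * r'" .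
qed

lemma fbl_norm_le_dominated:
  assumes "\<And>\<phi>. \<phi> \<in> lstar \<Longrightarrow> \<bar>f \<phi>\<bar> \<le> \<bar>g \<phi>\<bar>" "fbl_norm g \<le> ereal r"
  shows "fbl_norm f \<le> ereal r"
  using fbl_norm_le_pointwise_comb[of f 1 g 0 g r r] assms by simp

lemma fbl_norm_le_add:
  assumes "\<And>\<phi>. \<phi> \<in> lstar \<Longrightarrow> \<bar>f \<phi>\<bar> \<le> \<bar>g \<phi>\<bar> + \<bar>h \<phi>\<bar>"
    "fbl_norm g \<le> ereal r" "fbl_norm h \<le> ereal r'"
  shows "fbl_norm f \<le> ereal (r + r')"
  using fbl_norm_le_pointwise_comb[of f 1 g 1 h r r'] assms by simp

lemma fbl_norm_diff_triangle:
  assumes "fbl_norm (\<lambda>\<phi>. f \<phi> - g \<phi>) \<le> ereal r" "fbl_norm (\<lambda>\<phi>. g \<phi> - h \<phi>) \<le> ereal r'"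
  shows "fbl_norm (\<lambda>\<phi>. f \<phi> - h \<phi>) \<le> ereal (r + r')"
  by (rule fbl_norm_le_add[OF _ assms]) simp

lemma fbl_norm_zero [simp]: "fbl_norm (\<lambda>_. 0) = 0"
proof (rule antisym)
  show "fbl_norm (\<lambda>_. 0) \<le> 0"
    using fbl_norm_le_iff[of "\<lambda>_. 0" 0] by (simp add: zero_ereal_def)
  have "ereal (\<Sum>i<0. \<bar>(0::real)\<bar>) \<le> fbl_norm (\<lambda>_. 0 :: real)"
    unfolding fbl_norm_def by (intro Sup_upper CollectI exI[of _ 0]) simp
  then show "0 \<le> fbl_norm (\<lambda>_. 0)"
    by (simp add: zero_ereal_def)
qed

lemma fbl_norm_delta: "fbl_norm (fbl_delta x) \<le> ereal 1"
  unfolding fbl_norm_le_iff fbl_delta_def by auto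

lemma abs_le_fbl_norm:
  assumes "\<phi> \<in> lstar" "fbl_norm f \<le> ereal r"
  shows "\<bar>f \<phi>\<bar> \<le> r"
proof -
  have "\<bar>\<phi> x\<bar> \<le> 1" for x
    using assms(1) unfolding lstar_def by (simp add: abs_le_iff)
  then show ?thesis
    using assms(1) assms(2)[unfolded fbl_norm_le_iff, rule_format, of 1 "\<lambda>_. \<phi>"] by simp
qed

section \<open>Separating points by lattice homomorphisms into \<open>{0,1}\<close>\<close>

definition lattice_ideal :: "'a::lattice set \<Rightarrow> bool" where
  "lattice_ideal I \<longleftrightarrow> (\<forall>u\<in>I. \<forall>v\<le>u. v \<in> I) \<and> (\<forall>u\<in>I. \<forall>v\<in>I. sup u v \<in> I)"

lemma lattice_idealD:
  assumes "lattice_ideal I"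
  shows lattice_ideal_down: "u \<in> I \<Longrightarrow> v \<le> u \<Longrightarrow> v \<in> I"
    and lattice_ideal_sup: "u \<in> I \<Longrightarrow> v \<in> I \<Longrightarrow> sup u v \<in> I"
  using assms unfolding lattice_ideal_def by blast+

lemma lattice_ideal_atMost: "lattice_ideal {..y}"
  unfolding lattice_ideal_def by auto

lemma lattice_ideal_chain_Union:
  assumes "\<And>I. I \<in> C \<Longrightarrow> lattice_ideal I" "subset.chain UNIV C"
  shows "lattice_ideal (\<Union>C)"
  unfolding lattice_ideal_def
proof (intro conjI ballI allI impI)
  fix u v assume "u \<in> \<Union>C" "v \<le> u"
  then show "v \<in> \<Union>C" using assms(1) lattice_ideal_down by blast
next
  fix u v assume "u \<in> \<Union>C" "v \<in> \<Union>C"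
  then obtain I J where "I \<in> C" "J \<in> C" "u \<in> I" "v \<in> J" by blast
  moreover have "I \<subseteq> J \<or> J \<subseteq> I"
    using assms(2) \<open>I \<in> C\<close> \<open>J \<in> C\<close> unfolding subset.chain_def by blast
  ultimately show "sup u v \<in> \<Union>C" using assms(1) lattice_ideal_sup by blast
qed

lemma lattice_ideal_below_sup:
  assumes "lattice_ideal I"
  shows "lattice_ideal {w. \<exists>m\<in>I. w \<le> sup m u}"
  unfolding lattice_ideal_def
proof (intro conjI ballI allI impI)
  fix w v assume "w \<in> {w. \<exists>m\<in>I. w \<le> sup m u}" "v \<le> w"
  then show "v \<in> {w. \<exists>m\<in>I. w \<le> sup m u}" using order.trans by blast
next
  fix w v assume "w \<in> {w. \<exists>m\<in>I. w \<le> sup m u}" "v \<in> {w. \<exists>m\<in>I. w \<le> sup m u}"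
  then obtain m m' where "m \<in> I" "m' \<in> I" "w \<le> sup m u" "v \<le> sup m' u" by blast
  moreover have "sup m u \<le> sup (sup m m') u" "sup m' u \<le> sup (sup m m') u"
    by (intro sup_mono; simp)+
  ultimately have "sup w v \<le> sup (sup m m') u"
    by (meson le_sup_iff order_trans)
  then show "sup w v \<in> {w. \<exists>m\<in>I. w \<le> sup m u}"
    using lattice_ideal_sup[OF assms \<open>m \<in> I\<close> \<open>m' \<in> I\<close>] by blast
qed

lemma prime_ideal_separation:
  fixes x y :: "'a::distrib_lattice"
  assumes "\<not> x \<le> y"
  obtains M where "lattice_ideal M" "y \<in> M" "x \<notin> M" "\<And>u v. inf u v \<in> M \<Longrightarrow> u \<in> M \<or> v \<in> M"
proof -
  define F where "F = {I. lattice_ideal I \<and> y \<in> I \<and> x \<notin> I}"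
  have "\<exists>M\<in>F. \<forall>I\<in>F. M \<subseteq> I \<longrightarrow> I = M"
  proof (rule subset_Zorn_nonempty)
    show "F \<noteq> {}"
      using assms lattice_ideal_atMost[of y] unfolding F_def by blast
  next
    fix C assume "C \<noteq> {}" "subset.chain F C"
    then show "\<Union>C \<in> F"
      using lattice_ideal_chain_Union[of C] unfolding F_def subset.chain_def by blast
  qed
  then obtain M where M: "lattice_ideal M" "y \<in> M" "x \<notin> M"
    and maximal: "\<And>I. lattice_ideal I \<Longrightarrow> y \<in> I \<Longrightarrow> x \<notin> I \<Longrightarrow> M \<subseteq> I \<Longrightarrow> I = M"
    unfolding F_def by blast
  have below_sup: "\<exists>m\<in>M. x \<le> sup m u" if "u \<notin> M" for u
  proof (rule ccontr)
    let ?I = "{w. \<exists>m\<in>M. w \<le> sup m u}"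
    assume "\<not> (\<exists>m\<in>M. x \<le> sup m u)"
    then have "x \<notin> ?I" by blast
    moreover have "M \<subseteq> ?I" "u \<in> ?I"
      using \<open>y \<in> M\<close> by (auto intro: sup_ge1 sup_ge2)
    ultimately have "?I = M"
      using maximal lattice_ideal_below_sup[OF M(1)] \<open>y \<in> M\<close> by blast
    with \<open>u \<in> ?I\<close> \<open>u \<notin> M\<close> show False by blast
  qed
  show thesis
  proof (rule that[OF M])
    fix u v assume "inf u v \<in> M"
    show "u \<in> M \<or> v \<in> M"
    proof (rule ccontr)
      assume "\<not> (u \<in> M \<or> v \<in> M)"
      then obtain m m' where "m \<in> M" "m' \<in> M" "x \<le> sup m u" "x \<le> sup m' v"
        using below_sup by blast
      moreover have "sup m u \<le> sup (sup m m') u" "sup m' v \<le> sup (sup m m') v"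
        by (intro sup_mono; simp)+
      ultimately have "x \<le> inf (sup (sup m m') u) (sup (sup m m') v)"
        by (meson le_inf_iff order_trans)
      also have "\<dots> = sup (sup m m') (inf u v)"
        by (rule sup_inf_distrib1[symmetric])
      finally have "x \<le> sup (sup m m') (inf u v)" .
      moreover have "sup (sup m m') (inf u v) \<in> M"
        using lattice_ideal_sup[OF M(1)] \<open>m \<in> M\<close> \<open>m' \<in> M\<close> \<open>inf u v \<in> M\<close> by blast
      ultimately show False
        using lattice_ideal_down[OF M(1)] \<open>x \<notin> M\<close> by blast
    qed
  qed
qed

lemma lstar_separation:
  fixes x y :: "'a::distrib_lattice"
  assumes "\<not> x \<le> y"
  obtains \<phi> where "\<phi> \<in> lstar" "\<phi> x = 1" "\<phi> y = 0"
proof -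
  obtain M where M: "lattice_ideal M" "y \<in> M" "x \<notin> M"
    and prime: "\<And>u v. inf u v \<in> M \<Longrightarrow> u \<in> M \<or> v \<in> M"
    using prime_ideal_separation[OF assms] by blast
  have inf_mem: "inf u v \<in> M \<longleftrightarrow> u \<in> M \<or> v \<in> M" for u v
    using prime lattice_ideal_down[OF M(1)] by (meson inf.cobounded1 inf.cobounded2)
  have sup_mem: "sup u v \<in> M \<longleftrightarrow> u \<in> M \<and> v \<in> M" for u v
    using lattice_ideal_sup[OF M(1)] lattice_ideal_down[OF M(1)] by (meson sup.cobounded1 sup.cobounded2)
  let ?\<phi> = "\<lambda>w. if w \<in> M then 0 else (1::real)"
  have "?\<phi> \<in> lstar"
    unfolding lstar_def by (simp add: inf_mem sup_mem)
  then show thesis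
    using that M by simp
qed

lemma lstar_separates_points:
  fixes x y :: "'a::distrib_lattice"
  assumes "x \<noteq> y"
  obtains \<phi> where "\<phi> \<in> lstar" "\<bar>\<phi> x - \<phi> y\<bar> = 1"
proof (cases "x \<le> y")
  case True
  with assms have "\<not> y \<le> x" by auto
  then show thesis using lstar_separation that by (metis abs_minus_commute abs_one diff_zero)
next
  case False
  then show thesis using lstar_separation that by (metis abs_one diff_zero)
qed

lemma lstar_mono:
  assumes "\<phi> \<in> lstar" "x \<le> y"
  shows "\<phi> x \<le> \<phi> y"
proof -
  have "\<phi> x = \<phi> (inf x y)" using assms(2) by (simp add: inf.absorb1)
  also have "\<dots> = min (\<phi> x) (\<phi> y)" using assms(1) unfolding lstar_def by blast
  finally show ?thesis by linarith
qed

lemma fbl_delta_mono: "x \<le> y \<Longrightarrow> fbl_delta x \<phi> \<le> fbl_delta y \<phi>"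
  unfolding fbl_delta_def using lstar_mono by auto

lemma fbl_gen_vanishes: "f \<in> fbl_gen \<Longrightarrow> \<phi> \<notin> lstar \<Longrightarrow> f \<phi> = 0"
  by (induction f rule: fbl_gen.induct) (auto simp: fbl_delta_def)

lemma fbl_gen_pos_homog: "f \<in> fbl_gen \<Longrightarrow> pos_homog f"
proof (induction f rule: fbl_gen.induct)
  case (gen_delta x)
  then show ?case unfolding pos_homog_def fbl_delta_def by auto
next
  case (gen_add f g)
  then show ?case unfolding pos_homog_def by (simp add: distrib_left)
next
  case (gen_scale f c)
  then show ?case unfolding pos_homog_def by simp
next
  case (gen_sup f g)
  then show ?case unfolding pos_homog_def by (simp add: max_mult_distrib_left)
qed

lemma fbl_gen_norm_bounded: "f \<in> fbl_gen \<Longrightarrow> \<exists>r. fbl_norm f \<le> ereal r"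
proof (induction f rule: fbl_gen.induct)
  case (gen_delta x)
  then show ?case using fbl_norm_delta by blast
next
  case (gen_add f g)
  then obtain r r' where "fbl_norm f \<le> ereal r" "fbl_norm g \<le> ereal r'" by blast
  then have "fbl_norm (\<lambda>\<phi>. f \<phi> + g \<phi>) \<le> ereal (r + r')"
    by (intro fbl_norm_le_add) (auto intro: abs_triangle_ineq)
  then show ?case by blast
next
  case (gen_scale f c)
  then obtain r where "fbl_norm f \<le> ereal r" by blast
  then have "fbl_norm (\<lambda>\<phi>. c * f \<phi>) \<le> ereal (\<bar>c\<bar> * r + 0 * r)"
    by (intro fbl_norm_le_pointwise_comb) (auto simp: abs_mult)
  then show ?case by blast
next
  case (gen_sup f g)
  then obtain r r' where "fbl_norm f \<le> ereal r" "fbl_norm g \<le> ereal r'" by blast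
  then have "fbl_norm (\<lambda>\<phi>. max (f \<phi>) (g \<phi>)) \<le> ereal (r + r')"
    by (intro fbl_norm_le_add) (auto simp: max_def)
  then show ?case by blast
qed

lemma fbl_gen_subset_FBL: "fbl_gen \<subseteq> FBL"
proof
  fix f :: "('a \<Rightarrow> real) \<Rightarrow> real" assume f: "f \<in> fbl_gen"
  obtain r where "fbl_norm f \<le> ereal r"
    using fbl_gen_norm_bounded[OF f] by blast
  then have "fbl_norm f < \<infinity>"
    by (rule le_less_trans) simp
  then have "f \<in> fbl_space"
    unfolding fbl_space_def using fbl_gen_vanishes[OF f] fbl_gen_pos_homog[OF f] by blast
  moreover have "fbl_norm (\<lambda>\<phi>. f \<phi> - f \<phi>) < ereal e" if "e > 0" for e
    using that by simp
  ultimately show "f \<in> FBL"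
    unfolding FBL_def using f by blast
qed

lemma fbl_gen_min:
  assumes "f \<in> fbl_gen" "g \<in> fbl_gen"
  shows "(\<lambda>\<phi>. min (f \<phi>) (g \<phi>)) \<in> fbl_gen"
proof -
  have "(\<lambda>\<phi>. (-1) * max ((-1) * f \<phi>) ((-1) * g \<phi>)) \<in> fbl_gen"
    using assms by (intro fbl_gen.intros)
  moreover have "(-1) * max ((-1) * a) ((-1) * b) = min a b" for a b :: real
    by (simp add: max_def min_def)
  ultimately show ?thesis by simp
qed

lemma fbl_gen_in_interval:
  assumes "f \<in> fbl_gen" "\<And>\<phi>. fbl_delta a \<phi> \<le> f \<phi>" "\<And>\<phi>. f \<phi> \<le> fbl_delta b \<phi>"
  shows "f \<in> fbl_interval a b"
  unfolding fbl_interval_def using assms fbl_gen_subset_FBL by blast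

lemma fbl_delta_in_interval: "a \<le> x \<Longrightarrow> x \<le> b \<Longrightarrow> fbl_delta x \<in> fbl_interval a b"
  by (intro fbl_gen_in_interval fbl_gen.gen_delta fbl_delta_mono)

section \<open>Lower bound\<close>

lemma inj_into_dense_if_separated:
  assumes dense: "fbl_dense_in D S" and "F ` A \<subseteq> S" and "\<epsilon> > 0"
    and separated: "\<And>x y. x \<in> A \<Longrightarrow> y \<in> A \<Longrightarrow> x \<noteq> y \<Longrightarrow>
      \<exists>\<phi>\<in>lstar. \<epsilon> \<le> \<bar>F x \<phi> - F y \<phi>\<bar>"
  obtains g where "inj_on g A" "g ` A \<subseteq> D"
proof -
  have "\<exists>d\<in>D. fbl_norm (\<lambda>\<phi>. F x \<phi> - d \<phi>) < ereal (\<epsilon>/3)" if "x \<in> A" for x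
    using dense assms(2,3) that unfolding fbl_dense_in_def by auto
  then obtain g where g: "\<And>x. x \<in> A \<Longrightarrow> g x \<in> D"
    and g_close: "\<And>x. x \<in> A \<Longrightarrow> fbl_norm (\<lambda>\<phi>. F x \<phi> - g x \<phi>) < ereal (\<epsilon>/3)"
    by metis
  have close: "\<bar>F x \<phi> - g x \<phi>\<bar> \<le> \<epsilon>/3" if "x \<in> A" "\<phi> \<in> lstar" for x \<phi>
    using abs_le_fbl_norm[OF that(2) less_imp_le[OF g_close[OF that(1)]]] .
  have "inj_on g A"
  proof (rule inj_onI, rule ccontr)
    fix x y assume "x \<in> A" "y \<in> A" "g x = g y" "x \<noteq> y"
    then obtain \<phi> where "\<phi> \<in> lstar" "\<epsilon> \<le> \<bar>F x \<phi> - F y \<phi>\<bar>"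
      using separated by blast
    moreover have "\<bar>F x \<phi> - g x \<phi>\<bar> \<le> \<epsilon>/3" "\<bar>F y \<phi> - g x \<phi>\<bar> \<le> \<epsilon>/3"
      using close \<open>\<phi> \<in> lstar\<close> \<open>x \<in> A\<close> \<open>y \<in> A\<close> \<open>g x = g y\<close> by metis+
    ultimately show False
      using \<open>\<epsilon> > 0\<close> by linarith
  qed
  with g show thesis using that by blast
qed

lemma card_of_interval_le_dense:
  assumes "fbl_dense_in D (fbl_interval a b)"
  shows "|{a..b}| \<le>o |D|"
proof -
  have separated: "\<exists>\<phi>\<in>lstar. 1 \<le> \<bar>fbl_delta x \<phi> - fbl_delta y \<phi>\<bar>" if xy: "x \<noteq> y" for x y :: 'a
  proof -
    obtain \<phi> where "\<phi> \<in> lstar" "\<bar>\<phi> x - \<phi> y\<bar> = 1"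
      using lstar_separates_points[OF xy] by blast
    then show ?thesis
      unfolding fbl_delta_def by force
  qed
  have "fbl_delta ` {a..b} \<subseteq> fbl_interval a b"
    using fbl_delta_in_interval by auto
  then obtain g where "inj_on g {a..b}" "g ` {a..b} \<subseteq> D"
    by (rule inj_into_dense_if_separated[OF assms _ zero_less_one]) (use separated in blast)
  then show ?thesis
    using card_of_ordLeq by blast
qed

lemma fbl_segment_in_interval:
  assumes "a \<le> b" "0 \<le> t" "t \<le> 1"
  shows "(\<lambda>\<phi>. (1 - t) * fbl_delta a \<phi> + t * fbl_delta b \<phi>) \<in> fbl_interval a b"
proof (rule fbl_gen_in_interval)
  show "(\<lambda>\<phi>. (1 - t) * fbl_delta a \<phi> + t * fbl_delta b \<phi>) \<in> fbl_gen"
    by (intro fbl_gen.intros)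
next
  fix \<phi> :: "'a \<Rightarrow> real"
  have "fbl_delta a \<phi> \<le> fbl_delta b \<phi>"
    using fbl_delta_mono[OF assms(1)] .
  then have "0 \<le> t * (fbl_delta b \<phi> - fbl_delta a \<phi>)" "0 \<le> (1 - t) * (fbl_delta b \<phi> - fbl_delta a \<phi>)"
    using assms(2,3) by simp_all
  then show "fbl_delta a \<phi> \<le> (1 - t) * fbl_delta a \<phi> + t * fbl_delta b \<phi>"
    and "(1 - t) * fbl_delta a \<phi> + t * fbl_delta b \<phi> \<le> fbl_delta b \<phi>"
    by (simp_all add: algebra_simps)
qed

lemma dense_in_interval_infinite:
  assumes "a < b" and dense: "fbl_dense_in D (fbl_interval a b)"
  shows "infinite D"
proof
  assume "finite D"
  obtain \<phi>\<^sub>0 where \<phi>\<^sub>0: "\<phi>\<^sub>0 \<in> lstar" "\<phi>\<^sub>0 b = 1" "\<phi>\<^sub>0 a = 0"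
  proof (rule lstar_separation)
    show "\<not> b \<le> a"
      using \<open>a < b\<close> by (simp add: less_le_not_le)
  qed
  define n where "n = card D"
  define F where "F k = (\<lambda>\<phi>. (1 - k / (n + 1)) * fbl_delta a \<phi> + k / (n + 1) * fbl_delta b \<phi>)"
    for k :: nat
  have "F ` {..n} \<subseteq> fbl_interval a b"
  proof
    fix f assume "f \<in> F ` {..n}"
    then obtain k where "k \<le> n" "f = F k" by blast
    have "F k \<in> fbl_interval a b"
      unfolding F_def by (rule fbl_segment_in_interval) (use \<open>a < b\<close> \<open>k \<le> n\<close> in simp_all)
    with \<open>f = F k\<close> show "f \<in> fbl_interval a b" by simp
  qed
  moreover have "1 / (n + 1) > (0::real)"
    by simp
  moreover have separated: "\<exists>\<phi>\<in>lstar. 1 / (n + 1) \<le> \<bar>F k \<phi> - F l \<phi>\<bar>" if "k \<noteq> l" for k l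
  proof
    have "F k \<phi>\<^sub>0 - F l \<phi>\<^sub>0 = (real k - real l) / (n + 1)"
      using \<phi>\<^sub>0 unfolding F_def fbl_delta_def by (simp add: diff_divide_distrib)
    moreover have "1 \<le> \<bar>real k - real l\<bar>"
      using that by linarith
    ultimately show "1 / (n + 1) \<le> \<bar>F k \<phi>\<^sub>0 - F l \<phi>\<^sub>0\<bar>"
      by (simp add: divide_right_mono)
  qed (rule \<phi>\<^sub>0(1))
  ultimately obtain g where "inj_on g {..n}" "g ` {..n} \<subseteq> D"
    by (rule inj_into_dense_if_separated[OF dense]) (use separated in blast)
  then have "card {..n} \<le> card D"
    using card_inj_on_le \<open>finite D\<close> by blast
  then show False
    unfolding n_def by simp
qed

section \<open>A dense subset of small cardinality\<close>

lemma abs_max_diff_le: "\<bar>max a b - max c d\<bar> \<le> \<bar>a - c\<bar> + \<bar>(b::real) - d\<bar>"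
  by (auto simp: max_def abs_le_iff)

inductive_set fbl_gen_rat :: "(('a::distrib_lattice \<Rightarrow> real) \<Rightarrow> real) set" where
  rat_delta: "fbl_delta x \<in> fbl_gen_rat"
| rat_add: "f \<in> fbl_gen_rat \<Longrightarrow> g \<in> fbl_gen_rat \<Longrightarrow> (\<lambda>\<phi>. f \<phi> + g \<phi>) \<in> fbl_gen_rat"
| rat_scale: "f \<in> fbl_gen_rat \<Longrightarrow> (\<lambda>\<phi>. of_rat q * f \<phi>) \<in> fbl_gen_rat"
| rat_sup: "f \<in> fbl_gen_rat \<Longrightarrow> g \<in> fbl_gen_rat \<Longrightarrow> (\<lambda>\<phi>. max (f \<phi>) (g \<phi>)) \<in> fbl_gen_rat"

lemma fbl_gen_rat_subset_fbl_gen: "fbl_gen_rat \<subseteq> fbl_gen"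
proof
  fix f :: "('a \<Rightarrow> real) \<Rightarrow> real"
  show "f \<in> fbl_gen_rat \<Longrightarrow> f \<in> fbl_gen"
    by (induction rule: fbl_gen_rat.induct) (simp_all add: fbl_gen.intros)
qed

definition fbl_rat_approximable :: "(('a::distrib_lattice \<Rightarrow> real) \<Rightarrow> real) \<Rightarrow> bool" where
  "fbl_rat_approximable f \<longleftrightarrow> (\<forall>e>0. \<exists>q\<in>fbl_gen_rat. fbl_norm (\<lambda>\<phi>. f \<phi> - q \<phi>) \<le> ereal e)"

lemma fbl_rat_approximable_binop:
  fixes op :: "real \<Rightarrow> real \<Rightarrow> real" and f g :: "('a::distrib_lattice \<Rightarrow> real) \<Rightarrow> real"
  assumes lipschitz: "\<And>x y u v. \<bar>op x y - op u v\<bar> \<le> \<bar>x - u\<bar> + \<bar>y - v\<bar>"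
    and closed: "\<And>q q' :: ('a \<Rightarrow> real) \<Rightarrow> real. q \<in> fbl_gen_rat \<Longrightarrow> q' \<in> fbl_gen_rat \<Longrightarrow>
      (\<lambda>\<phi>. op (q \<phi>) (q' \<phi>)) \<in> fbl_gen_rat"
    and "fbl_rat_approximable f" "fbl_rat_approximable g"
  shows "fbl_rat_approximable (\<lambda>\<phi>. op (f \<phi>) (g \<phi>))"
  unfolding fbl_rat_approximable_def
proof (intro allI impI)
  fix e :: real assume "e > 0"
  then have "e/2 > 0" by simp
  then obtain q q' where q: "q \<in> fbl_gen_rat" "fbl_norm (\<lambda>\<phi>. f \<phi> - q \<phi>) \<le> ereal (e/2)"
    and q': "q' \<in> fbl_gen_rat" "fbl_norm (\<lambda>\<phi>. g \<phi> - q' \<phi>) \<le> ereal (e/2)"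
    using assms(3,4) unfolding fbl_rat_approximable_def by blast
  have "fbl_norm (\<lambda>\<phi>. op (f \<phi>) (g \<phi>) - op (q \<phi>) (q' \<phi>)) \<le> ereal (e/2 + e/2)"
    by (rule fbl_norm_le_add[OF _ q(2) q'(2)]) (rule lipschitz)
  then show "\<exists>h\<in>fbl_gen_rat. fbl_norm (\<lambda>\<phi>. op (f \<phi>) (g \<phi>) - h \<phi>) \<le> ereal e"
    using closed[OF q(1) q'(1)] by auto
qed

lemma fbl_rat_approximable_scale:
  assumes "fbl_norm f \<le> ereal M" "fbl_rat_approximable f"
  shows "fbl_rat_approximable (\<lambda>\<phi>. c * f \<phi>)"
  unfolding fbl_rat_approximable_def
proof (intro allI impI)
  fix e :: real assume "e > 0"
  have M: "fbl_norm f \<le> ereal \<bar>M\<bar>"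
    using assms(1) by (rule order_trans) simp
  obtain r where "r \<in> \<rat>" and r: "\<bar>r - c\<bar> < e / (2 * (\<bar>M\<bar> + 1))"
    using rational_approximation[of "e / (2 * (\<bar>M\<bar> + 1))" c] \<open>e > 0\<close> by auto
  from \<open>r \<in> \<rat>\<close> obtain r' where r': "r = of_rat r'"
    by (rule Rats_cases)
  define \<eta> where "\<eta> = e / (2 * (\<bar>r\<bar> + 1))"
  have "\<eta> > 0"
    unfolding \<eta>_def using \<open>e > 0\<close> by (simp add: add_nonneg_pos)
  then obtain q where q: "q \<in> fbl_gen_rat" "fbl_norm (\<lambda>\<phi>. f \<phi> - q \<phi>) \<le> ereal \<eta>"
    using assms(2) unfolding fbl_rat_approximable_def by blast
  have bound: "fbl_norm (\<lambda>\<phi>. c * f \<phi> - r * q \<phi>) \<le> ereal (\<bar>c - r\<bar> * \<bar>M\<bar> + \<bar>r\<bar> * \<eta>)"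
  proof (rule fbl_norm_le_pointwise_comb[OF _ _ _ M q(2)])
    fix \<phi> :: "'a \<Rightarrow> real"
    have "c * f \<phi> - r * q \<phi> = (c - r) * f \<phi> + r * (f \<phi> - q \<phi>)"
      by (simp add: algebra_simps)
    then show "\<bar>c * f \<phi> - r * q \<phi>\<bar> \<le> \<bar>c - r\<bar> * \<bar>f \<phi>\<bar> + \<bar>r\<bar> * \<bar>f \<phi> - q \<phi>\<bar>"
      by (metis abs_mult abs_triangle_ineq)
  qed simp_all
  have "\<bar>c - r\<bar> * \<bar>M\<bar> \<le> e / (2 * (\<bar>M\<bar> + 1)) * \<bar>M\<bar>"
    using r by (intro mult_right_mono) (simp_all add: abs_minus_commute)
  also have "\<dots> \<le> e/2"
    using \<open>e > 0\<close> by (simp add: field_simps)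
  finally have "\<bar>c - r\<bar> * \<bar>M\<bar> \<le> e/2" .
  moreover have "\<bar>r\<bar> * \<eta> \<le> (\<bar>r\<bar> + 1) * \<eta>"
    using \<open>\<eta> > 0\<close> by simp
  moreover have "(\<bar>r\<bar> + 1) * \<eta> = e/2"
  proof -
    have "\<bar>r\<bar> + 1 > 0" by (simp add: add_nonneg_pos)
    then show ?thesis unfolding \<eta>_def by (simp add: field_simps)
  qed
  ultimately have "\<bar>c - r\<bar> * \<bar>M\<bar> + \<bar>r\<bar> * \<eta> \<le> e"
    by linarith
  then have "fbl_norm (\<lambda>\<phi>. c * f \<phi> - r * q \<phi>) \<le> ereal e"
    by (intro order_trans[OF bound]) simp
  then show "\<exists>h\<in>fbl_gen_rat. fbl_norm (\<lambda>\<phi>. c * f \<phi> - h \<phi>) \<le> ereal e"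
    using fbl_gen_rat.rat_scale[OF q(1), of r'] r' by auto
qed

lemma fbl_gen_rat_approximable: "f \<in> fbl_gen \<Longrightarrow> fbl_rat_approximable f"
proof (induction f rule: fbl_gen.induct)
  case (gen_delta x)
  have "fbl_norm (\<lambda>\<phi>. fbl_delta x \<phi> - fbl_delta x \<phi>) \<le> ereal e" if "e > 0" for e
    using that by simp
  then show ?case
    unfolding fbl_rat_approximable_def using fbl_gen_rat.rat_delta by blast
next
  case (gen_add f g)
  show ?case
    by (rule fbl_rat_approximable_binop[where op = "(+)", OF _ fbl_gen_rat.rat_add gen_add.IH])
      (simp add: abs_diff_triangle_ineq)
next
  case (gen_scale f c)
  then show ?case
    using fbl_gen_norm_bounded fbl_rat_approximable_scale by blast
next
  case (gen_sup f g)
  show ?case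
    by (rule fbl_rat_approximable_binop[where op = max, OF abs_max_diff_le fbl_gen_rat.rat_sup gen_sup.IH])
qed

definition fbl_clip ::
    "'a::distrib_lattice \<Rightarrow> 'a \<Rightarrow> (('a \<Rightarrow> real) \<Rightarrow> real) \<Rightarrow> (('a \<Rightarrow> real) \<Rightarrow> real)" where
  "fbl_clip a b q = (\<lambda>\<phi>. min (max (q \<phi>) (fbl_delta a \<phi>)) (fbl_delta b \<phi>))"

lemma fbl_clip_in_interval:
  assumes "a \<le> b" "q \<in> fbl_gen"
  shows "fbl_clip a b q \<in> fbl_interval a b"
proof (rule fbl_gen_in_interval)
  show "fbl_clip a b q \<in> fbl_gen"
    unfolding fbl_clip_def using assms(2) by (intro fbl_gen_min fbl_gen.intros)
  fix \<phi> :: "'a \<Rightarrow> real"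
  show "fbl_delta a \<phi> \<le> fbl_clip a b q \<phi>" "fbl_clip a b q \<phi> \<le> fbl_delta b \<phi>"
    unfolding fbl_clip_def using fbl_delta_mono[OF assms(1), of \<phi>] by simp_all
qed

lemma fbl_clip_norm_diff_le:
  assumes "f \<in> fbl_interval a b" "fbl_norm (\<lambda>\<phi>. f \<phi> - q \<phi>) \<le> ereal r"
  shows "fbl_norm (\<lambda>\<phi>. f \<phi> - fbl_clip a b q \<phi>) \<le> ereal r"
proof (rule fbl_norm_le_dominated[OF _ assms(2)])
  fix \<phi> :: "'a \<Rightarrow> real"
  have "fbl_delta a \<phi> \<le> f \<phi>" "f \<phi> \<le> fbl_delta b \<phi>"
    using assms(1) unfolding fbl_interval_def by auto
  then show "\<bar>f \<phi> - fbl_clip a b q \<phi>\<bar> \<le> \<bar>f \<phi> - q \<phi>\<bar>"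
    unfolding fbl_clip_def by (auto simp: min_def max_def abs_le_iff)
qed

lemma fbl_clip_gen_rat_dense:
  assumes "a \<le> b"
  shows "fbl_dense_in (fbl_clip a b ` fbl_gen_rat) (fbl_interval a b)"
  unfolding fbl_dense_in_def
proof (intro conjI ballI allI impI)
  show "fbl_clip a b ` fbl_gen_rat \<subseteq> fbl_interval a b"
    using fbl_clip_in_interval[OF assms] fbl_gen_rat_subset_fbl_gen by blast
next
  fix f and e :: real assume f: "f \<in> fbl_interval a b" and "e > 0"
  then have "f \<in> FBL" "e/3 > 0"
    unfolding fbl_interval_def by simp_all
  then obtain g where "g \<in> fbl_gen" "fbl_norm (\<lambda>\<phi>. f \<phi> - g \<phi>) < ereal (e/3)"
    unfolding FBL_def by blast
  moreover obtain q where "q \<in> fbl_gen_rat" "fbl_norm (\<lambda>\<phi>. g \<phi> - q \<phi>) \<le> ereal (e/3)"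
    using fbl_gen_rat_approximable[OF \<open>g \<in> fbl_gen\<close>] \<open>e/3 > 0\<close>
    unfolding fbl_rat_approximable_def by blast
  ultimately have "fbl_norm (\<lambda>\<phi>. f \<phi> - q \<phi>) \<le> ereal (e/3 + e/3)"
    by (intro fbl_norm_diff_triangle) simp_all
  then have "fbl_norm (\<lambda>\<phi>. f \<phi> - fbl_clip a b q \<phi>) \<le> ereal (e/3 + e/3)"
    by (rule fbl_clip_norm_diff_le[OF f])
  also have "\<dots> < ereal e"
    using \<open>e > 0\<close> by simp
  finally show "\<exists>h\<in>fbl_clip a b ` fbl_gen_rat. fbl_norm (\<lambda>\<phi>. f \<phi> - h \<phi>) < ereal e"
    using \<open>q \<in> fbl_gen_rat\<close> by blast
qed

datatype rpn_op = Scale rat | Add | Max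

instance rpn_op :: countable
  by countable_datatype

fun rpn_step ::
    "'a::distrib_lattice + rpn_op \<Rightarrow> (('a \<Rightarrow> real) \<Rightarrow> real) list \<Rightarrow> (('a \<Rightarrow> real) \<Rightarrow> real) list"
  where
  "rpn_step (Inl x) s = fbl_delta x # s"
| "rpn_step (Inr (Scale q)) (f # s) = (\<lambda>\<phi>. of_rat q * f \<phi>) # s"
| "rpn_step (Inr Add) (f # g # s) = (\<lambda>\<phi>. f \<phi> + g \<phi>) # s"
| "rpn_step (Inr Max) (f # g # s) = (\<lambda>\<phi>. max (f \<phi>) (g \<phi>)) # s"
| "rpn_step _ s = s"

definition rpn_eval :: "('a::distrib_lattice + rpn_op) list \<Rightarrow> (('a \<Rightarrow> real) \<Rightarrow> real)" where
  "rpn_eval p = hd (fold rpn_step p [])"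

lemma fbl_gen_rat_rpn_program:
  "f \<in> fbl_gen_rat \<Longrightarrow> \<exists>p. \<forall>s. fold rpn_step p s = f # s"
proof (induction rule: fbl_gen_rat.induct)
  case (rat_delta x)
  show ?case by (intro exI[of _ "[Inl x]"]) simp
next
  case (rat_add f g)
  then obtain p p' where "\<forall>s. fold rpn_step p s = f # s" "\<forall>s. fold rpn_step p' s = g # s"
    by blast
  then show ?case by (intro exI[of _ "p' @ p @ [Inr Add]"]) simp
next
  case (rat_scale f q)
  then obtain p where "\<forall>s. fold rpn_step p s = f # s"
    by blast
  then show ?case by (intro exI[of _ "p @ [Inr (Scale q)]"]) simp
next
  case (rat_sup f g)
  then obtain p p' where "\<forall>s. fold rpn_step p s = f # s" "\<forall>s. fold rpn_step p' s = g # s"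
    by blast
  then show ?case by (intro exI[of _ "p' @ p @ [Inr Max]"]) simp
qed

lemma fbl_gen_rat_subset_range_rpn_eval: "fbl_gen_rat \<subseteq> range rpn_eval"
proof
  fix f :: "('a \<Rightarrow> real) \<Rightarrow> real" assume "f \<in> fbl_gen_rat"
  then obtain p where "fold rpn_step p [] = [f]"
    using fbl_gen_rat_rpn_program by blast
  then show "f \<in> range rpn_eval"
    unfolding rpn_eval_def by (metis list.sel(1) rangeI)
qed

lemma card_of_lists_le_infinite:
  assumes "infinite A"
  shows "|lists A| \<le>o |A|"
proof -
  define L where "L n = {xs \<in> lists A. length xs = n}" for n
  have "|L n| \<le>o |A|" for n
  proof (induction n)
    case 0
    have "L 0 = {[]}" unfolding L_def by auto
    then show ?case
      using assms card_of_singl_ordLeq by (metis finite.emptyI)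
  next
    case (Suc n)
    have "L (Suc n) = (\<lambda>(x, xs). x # xs) ` (A \<times> L n)"
      unfolding L_def by (auto simp: length_Suc_conv image_iff)
    then have "|L (Suc n)| \<le>o |A \<times> L n|"
      by (simp add: card_of_image)
    also have "|A \<times> L n| \<le>o |A \<times> A|"
      using Suc card_of_Times_mono2 by blast
    also have "|A \<times> A| \<le>o |A|"
      using card_of_Times_same_infinite[OF assms] ordIso_iff_ordLeq by blast
    finally show ?case .
  qed
  moreover have "lists A = (\<Union>n. L n)"
    unfolding L_def by auto
  ultimately show ?thesis
    using card_of_UNION_ordLeq_infinite[OF assms, of UNIV L] infinite_iff_card_of_nat assms
    by auto
qed

lemma countable_or_card_of_range_le:
  fixes F :: "('a + 'b::countable) list \<Rightarrow> 'c"
  shows "countable (range F) \<or> |range F| \<le>o |UNIV :: 'a set|"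
proof (cases "countable (UNIV :: 'a set)")
  case True
  then have "countable (UNIV :: ('a + 'b) set)"
    unfolding UNIV_sum by auto
  then have "countable (lists (UNIV :: ('a + 'b) set))"
    by (rule countable_lists)
  then show ?thesis
    by (simp add: lists_UNIV)
next
  case False
  then have "infinite (UNIV :: 'a set)"
    using countable_finite by blast
  have "|UNIV :: 'b set| \<le>o |UNIV :: 'a set|"
    using countable_card_of_nat[THEN iffD1, OF countableI_type] \<open>infinite (UNIV :: 'a set)\<close>
      infinite_iff_card_of_nat ordLeq_transitive by blast
  then have "|UNIV :: ('a + 'b) set| \<le>o |UNIV :: 'a set|"
    using card_of_Plus_infinite1[OF \<open>infinite (UNIV :: 'a set)\<close>] ordIso_iff_ordLeq
    by (metis UNIV_Plus_UNIV)
  moreover have "infinite (UNIV :: ('a + 'b) set)"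
    using \<open>infinite (UNIV :: 'a set)\<close> by (metis UNIV_Plus_UNIV finite_PlusD(1))
  ultimately have "|UNIV :: ('a + 'b) list set| \<le>o |UNIV :: 'a set|"
    using card_of_lists_le_infinite ordLeq_transitive by (metis lists_UNIV)
  then show ?thesis
    using card_of_image ordLeq_transitive by blast
qed

theorem mainTheorem5:
  fixes a b :: "'a::distrib_lattice"
  assumes "a < b"
  shows "(\<forall>D. fbl_dense_in D (fbl_interval a b) \<longrightarrow>
             infinite D \<and> (card_of {a..b}, card_of D) \<in> ordLeq)
       \<and> (\<exists>D. fbl_dense_in D (fbl_interval a b) \<and>
             (countable D \<or> (card_of D, card_of (UNIV :: 'a set)) \<in> ordLeq))"
proof -
  have lower: "infinite D \<and> |{a..b}| \<le>o |D|" if "fbl_dense_in D (fbl_interval a b)" for D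
    using dense_in_interval_infinite[OF assms that] card_of_interval_le_dense[OF that] by blast
  let ?D = "fbl_clip a b ` fbl_gen_rat"
  have "?D \<subseteq> range (fbl_clip a b \<circ> rpn_eval)"
    unfolding image_comp[symmetric] using fbl_gen_rat_subset_range_rpn_eval by (rule image_mono)
  with countable_or_card_of_range_le[of "fbl_clip a b \<circ> rpn_eval"]
  have "countable ?D \<or> |?D| \<le>o |UNIV :: 'a set|"
    by (meson countable_subset card_of_mono1 ordLeq_transitive)
  then show ?thesis
    using lower fbl_clip_gen_rat_dense[OF less_imp_le[OF assms]] by blast
qed

end
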